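(* Let $k\ge1$, $j\ge0$, $n=k+j$ and $N\in\mathcal{OC}_{k,j}$. Then $$\sum_{\{e',e''\}\subseteq \mathrm{ToT}(N),\ e'\neq e''}A_C(N(e',e''))=(2n^2+n-2)A_C(N)-(2n-1),$$ where the sum ranges over unordered pairs of distinct edges of $\mathrm{ToT}(N)$.
   Context: A (planted, binary) phylogenetic network on a taxon set $X$ with $|X|=n$ is a finite acyclic directed graph with: - a unique root $\rho$ of indegree 0 and outdegree 1; - exactly $n$ nodes of indegree 1 and outdegree 0 (leaves), labeled bijectively by $X$; - every other node is either a tree node (indegree 1, outdegree 2) or a reticulation node (indegree 2, outdegree 1). An edge $(p,q)$ is a tree edge if $q$ is a tree node or a leaf. A network is simplex if the child of every reticulation node is a leaf. A node $u$ is an ancestor of a node $v\neq u$ if some directed path from $\rho$ to $v$ passes through $u$. The ancestor number $\alpha_N(v)$ is the number of ancestors of $v$. The top tree component $C(N)$ of a simplex network $N$ is the set of tree nodes and leaves not descending from any reticulation node. Define $A_C(N)=\sum_{v\in C(N)}\alpha_N(v)$. $\mathrm{ToT}(N)$ is the set of tree edges $(u,v)$ of $N$ with $u$ not a reticulation node, i.e. the tree edges of the top tree component. For $k\ge1$, $j\ge0$, $\mathcal{OC}_{k,j}$ is the set of simplex networks on taxa $\{1,\dots,k+j\}$ with exactly $j$ reticulation nodes, whose children are the leaves $k+1,\dots,k+j$. For $N\in\mathcal{OC}_{k,j}$ and distinct $e'=(u,v)$, $e''=(s,t)$ in $\mathrm{ToT}(N)$, the network $N(e',e'')$ is obtained from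 $N$ as follows: - subdivide $e'$ into $(u,p),(p,v)$ and $e''$ into $(s,q),(q,t)$, with new nodes $p,q$; - add a new reticulation node $r$ with edges $(p,r),(q,r)$; - add a new leaf labeled $n+1$ with edge $(r,n+1)$. *)

theory Defs
  imports Main
begin

record 'v network =
  nodes :: "'v set"
  edges :: "('v \<times> 'v) set"
  label :: "'v \<Rightarrow> nat"

definition indeg :: "('v, 'b) network_scheme \<Rightarrow> 'v \<Rightarrow> nat" where
  "indeg N v = card {u. (u, v) \<in> edges N}"

definition outdeg :: "('v, 'b) network_scheme \<Rightarrow> 'v \<Rightarrow> nat" where
  "outdeg N v = card {w. (v, w) \<in> edges N}"

definition is_root :: "('v, 'b) network_scheme \<Rightarrow> 'v \<Rightarrow> bool" where
  "is_root N v \<longleftrightarrow> v \<in> nodes N \<and> indeg N v = 0 \<and> outdeg N v = 1"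

definition is_leaf :: "('v, 'b) network_scheme \<Rightarrow> 'v \<Rightarrow> bool" where
  "is_leaf N v \<longleftrightarrow> v \<in> nodes N \<and> indeg N v = 1 \<and> outdeg N v = 0"

definition is_tree_node :: "('v, 'b) network_scheme \<Rightarrow> 'v \<Rightarrow> bool" where
  "is_tree_node N v \<longleftrightarrow> v \<in> nodes N \<and> indeg N v = 1 \<and> outdeg N v = 2"

definition is_ret :: "('v, 'b) network_scheme \<Rightarrow> 'v \<Rightarrow> bool" where
  "is_ret N v \<longleftrightarrow> v \<in> nodes N \<and> indeg N v = 2 \<and> outdeg N v = 1"

definition leaves :: "('v, 'b) network_scheme \<Rightarrow> 'v set" where
  "leaves N = {v. is_leaf N v}"

definition phylo_network :: "('v, 'b) network_scheme \<Rightarrow> nat set \<Rightarrow> bool" where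
  "phylo_network N X \<longleftrightarrow>
     finite (nodes N) \<and>
     edges N \<subseteq> nodes N \<times> nodes N \<and>
     acyclic (edges N) \<and>
     (\<exists>!\<rho>. is_root N \<rho>) \<and>
     (\<forall>v \<in> nodes N. is_root N v \<or> is_leaf N v \<or> is_tree_node N v \<or> is_ret N v) \<and>
     bij_betw (label N) (leaves N) X"

definition root_of :: "('v, 'b) network_scheme \<Rightarrow> 'v" where
  "root_of N = (THE \<rho>. is_root N \<rho>)"

definition simplex :: "('v, 'b) network_scheme \<Rightarrow> bool" where
  "simplex N \<longleftrightarrow> (\<forall>r c. is_ret N r \<and> (r, c) \<in> edges N \<longrightarrow> is_leaf N c)"

definition ancestor :: "('v, 'b) network_scheme \<Rightarrow> 'v \<Rightarrow> 'v \<Rightarrow> bool" where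
  "ancestor N u v \<longleftrightarrow> u \<noteq> v \<and> (root_of N, u) \<in> (edges N)\<^sup>* \<and> (u, v) \<in> (edges N)\<^sup>*"

definition anc_num :: "('v, 'b) network_scheme \<Rightarrow> 'v \<Rightarrow> nat" where
  "anc_num N v = card {u. ancestor N u v}"

definition top_comp :: "('v, 'b) network_scheme \<Rightarrow> 'v set" where
  "top_comp N = {v \<in> nodes N. (is_tree_node N v \<or> is_leaf N v) \<and>
                  \<not> (\<exists>r. is_ret N r \<and> (r, v) \<in> (edges N)\<^sup>+)}"

definition A_C :: "('v, 'b) network_scheme \<Rightarrow> nat" where
  "A_C N = (\<Sum>v \<in> top_comp N. anc_num N v)"

definition tree_edge :: "('v, 'b) network_scheme \<Rightarrow> 'v \<times> 'v \<Rightarrow> bool" where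
  "tree_edge N e \<longleftrightarrow> e \<in> edges N \<and> (is_tree_node N (snd e) \<or> is_leaf N (snd e))"

definition ToT :: "('v, 'b) network_scheme \<Rightarrow> ('v \<times> 'v) set" where
  "ToT N = {e. tree_edge N e \<and> \<not> is_ret N (fst e)}"

definition OC :: "nat \<Rightarrow> nat \<Rightarrow> ('v, 'b) network_scheme \<Rightarrow> bool" where
  "OC k j N \<longleftrightarrow> phylo_network N {1..k+j} \<and> simplex N \<and>
     card {r. is_ret N r} = j \<and>
     label N ` {c. \<exists>r. is_ret N r \<and> (r, c) \<in> edges N} = {k+1..k+j}"

text \<open>Nodes of N(e',e''): old nodes, the subdivision node of each chosen edge
  (p for e', q for e''), the new reticulation r, and the new leaf.\<close>
datatype 'v ext = Old 'v | Sub "'v \<times> 'v" | Ret | NewLeaf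

definition ins_ret_set :: "'v network \<Rightarrow> ('v \<times> 'v) set \<Rightarrow> 'v ext network" where
  "ins_ret_set N P =
    \<lparr> nodes = Old ` nodes N \<union> Sub ` P \<union> {Ret, NewLeaf},
      edges = map_prod Old Old ` (edges N - P)
              \<union> (\<Union>(u, v) \<in> P. {(Old u, Sub (u, v)), (Sub (u, v), Old v), (Sub (u, v), Ret)})
              \<union> {(Ret, NewLeaf)},
      label = (\<lambda>x. case x of Old y \<Rightarrow> label N y
                           | NewLeaf \<Rightarrow> card (leaves N) + 1
                           | _ \<Rightarrow> 0) \<rparr>"

definition ins_ret :: "'v network \<Rightarrow> 'v \<times> 'v \<Rightarrow> 'v \<times> 'v \<Rightarrow> 'v ext network" where
  "ins_ret N e' e'' = ins_ret_set N {e', e''}"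

end

theory Submission
  imports Defs
begin

text \<open>Inserting a reticulation across two edges \<open>a\<close>, \<open>b\<close> of \<open>ToT N\<close> adds exactly the two
  subdivision nodes to the top tree component. The subdivision node on \<open>a = (u, v)\<close> becomes a
  new ancestor of every top-component node below \<open>v\<close>, and it has the ancestors of \<open>v\<close> plus,
  possibly, the other subdivision node. Summing over all pairs, both per-edge totals equal
  \<open>A_C N\<close> by double counting, because heads give a bijection between \<open>ToT N\<close> and the top
  component; the pairs with \<open>b\<close> above \<open>a\<close> contribute \<open>A_C N - |ToT N|\<close>; and the handshake
  lemma gives \<open>|ToT N| = 2n - 1\<close>.\<close>

lemma sum_card_filter_swap:
  assumes "finite A" and "finite B"
  shows "(\<Sum>a\<in>A. card {b \<in> B. Q a b}) = (\<Sum>b\<in>B. card {a \<in> A. Q a b})"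
proof -
  have card_eq: "card {y \<in> Y. R y} = (\<Sum>y\<in>Y. of_bool (R y))" if "finite Y" for Y :: "'c set" and R
    using that by (simp add: Collect_conj_eq Int_commute)
  show ?thesis
    using assms by (simp only: card_eq) (rule sum.swap)
qed

lemma sum_doubletons:
  fixes g :: "'a set \<Rightarrow> 'b::comm_semiring_1"
  assumes "finite T"
  shows "2 * (\<Sum>P \<in> {{a, b} | a b. a \<in> T \<and> b \<in> T \<and> a \<noteq> b}. g P)
         = (\<Sum>a\<in>T. \<Sum>b\<in>T - {a}. g {a, b})"
proof -
  define S where "S = Sigma T (\<lambda>a. T - {a})"
  define h where "h = (\<lambda>x. {fst x, snd x :: 'a})"
  have finite_S: "finite S" unfolding S_def using assms by simp
  have image: "{{a, b} | a b. a \<in> T \<and> b \<in> T \<and> a \<noteq> b} = h ` S"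
  proof (rule set_eqI, rule iffI)
    fix P assume "P \<in> {{a, b} | a b. a \<in> T \<and> b \<in> T \<and> a \<noteq> b}"
    then obtain a b where "P = h (a, b)" "(a, b) \<in> S" unfolding S_def h_def by auto
    then show "P \<in> h ` S" by blast
  next
    fix P assume "P \<in> h ` S"
    then obtain a b where "(a, b) \<in> S" "P = {a, b}" unfolding h_def by auto
    then show "P \<in> {{a, b} | a b. a \<in> T \<and> b \<in> T \<and> a \<noteq> b}" unfolding S_def by blast
  qed
  have fibre: "{x \<in> S. h x = h (a, b)} = {(a, b), (b, a)}" if "(a, b) \<in> S" for a b
  proof (rule set_eqI)
    fix x show "x \<in> {x \<in> S. h x = h (a, b)} \<longleftrightarrow> x \<in> {(a, b), (b, a)}"
      using that unfolding S_def h_def by (cases x) (auto simp: doubleton_eq_iff)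
  qed
  have "(\<Sum>a\<in>T. \<Sum>b\<in>T - {a}. g {a, b}) = (\<Sum>x\<in>S. g (h x))"
    unfolding S_def h_def using assms by (simp add: sum.Sigma split_def)
  also have "\<dots> = (\<Sum>P\<in>h ` S. \<Sum>x \<in> {x \<in> S. h x = P}. g (h x))"
    using finite_S by (rule sum.image_gen)
  also have "\<dots> = (\<Sum>P\<in>h ` S. 2 * g P)"
  proof (rule sum.cong[OF refl])
    fix P assume "P \<in> h ` S"
    then obtain a b where ab: "(a, b) \<in> S" "P = h (a, b)" by auto
    then have "(a, b) \<noteq> (b, a)" unfolding S_def by auto
    then show "(\<Sum>x \<in> {x \<in> S. h x = P}. g (h x)) = 2 * g P"
      using fibre[OF ab(1)] ab(2) by (simp add: h_def insert_commute mult_2)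
  qed
  finally show ?thesis unfolding image by (simp add: sum_distrib_left)
qed

lemma sum_offdiag_swap:
  "(\<Sum>a\<in>A. \<Sum>b\<in>A - {a}. f a b) = (\<Sum>a\<in>A. \<Sum>b\<in>A - {a}. f b a)"
proof (cases "finite A")
  case True
  have "A - {a} = {b. b \<in> A \<and> a \<noteq> b}" for a by auto
  moreover have "A - {a} = {b. b \<in> A \<and> b \<noteq> a}" for a by auto
  ultimately show ?thesis
    using sum.swap_restrict[OF True True, of f "\<lambda>a b. a \<noteq> b"] by simp
qed simp

section \<open>The top tree component of a simplex network\<close>

definition top_desc_num :: "('v, 'b) network_scheme \<Rightarrow> 'v \<Rightarrow> nat" where
  "top_desc_num N v = card {w \<in> top_comp N. (v, w) \<in> (edges N)\<^sup>*}"

locale simplex_network =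
  fixes N :: "'v network" and X :: "nat set"
  assumes phylo: "phylo_network N X" and simplex_N: "simplex N"
begin

abbreviation "E \<equiv> edges N"
abbreviation "V \<equiv> nodes N"
abbreviation "\<rho> \<equiv> root_of N"
abbreviation "C \<equiv> top_comp N"
abbreviation "T \<equiv> ToT N"

lemma finite_nodes: "finite V"
  using phylo by (simp add: phylo_network_def)

lemma edges_subset: "E \<subseteq> V \<times> V"
  using phylo by (simp add: phylo_network_def)

lemma finite_edges: "finite E"
  using finite_nodes edges_subset by (meson finite_SigmaI finite_subset)

lemma acyclic_edges: "acyclic E"
  using phylo by (simp add: phylo_network_def)

lemma edge_tail_node: "(u, v) \<in> E \<Longrightarrow> u \<in> V"
  and edge_head_node: "(u, v) \<in> E \<Longrightarrow> v \<in> V"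
  using edges_subset by blast+

lemma ex1_root: "\<exists>!r. is_root N r"
  using phylo by (simp add: phylo_network_def)

lemma is_root_root: "is_root N \<rho>"
  unfolding root_of_def using ex1_root by (rule theI')

lemma root_unique: "is_root N r \<Longrightarrow> r = \<rho>"
  using ex1_root is_root_root by blast

lemma node_cases:
  "v \<in> V \<Longrightarrow> is_root N v \<or> is_leaf N v \<or> is_tree_node N v \<or> is_ret N v"
  using phylo by (simp add: phylo_network_def)

lemma finite_parents: "finite {u. (u, v) \<in> E}"
  by (rule finite_subset[of _ "fst ` E"]) (force, simp add: finite_edges)

lemma finite_children: "finite {w. (v, w) \<in> E}"
  by (rule finite_subset[of _ "snd ` E"]) (force, simp add: finite_edges)

lemma leaf_no_child: "is_leaf N u \<Longrightarrow> (u, v) \<notin> E"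
  using finite_children[of u] unfolding is_leaf_def outdeg_def by auto

lemma leaf_not_tree_node: "is_leaf N v \<Longrightarrow> \<not> is_tree_node N v"
  unfolding is_leaf_def is_tree_node_def by simp

lemma parent_unique:
  "is_tree_node N v \<or> is_leaf N v \<Longrightarrow> (u, v) \<in> E \<Longrightarrow> (w, v) \<in> E \<Longrightarrow> u = w"
  unfolding is_tree_node_def is_leaf_def indeg_def
  by (metis (mono_tags, lifting) card_1_singletonE mem_Collect_eq singletonD)

lemma rtrancl_source_node: "(u, v) \<in> E\<^sup>* \<Longrightarrow> v \<in> V \<Longrightarrow> u \<in> V"
  by (erule converse_rtranclE) (auto dest: edge_tail_node)

lemma finite_ancestors: "v \<in> V \<Longrightarrow> finite {u. Q u \<and> (u, v) \<in> E\<^sup>*}"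
  using rtrancl_source_node by (auto intro: finite_subset[OF _ finite_nodes])

lemma parent_exists: "v \<in> V \<Longrightarrow> v \<noteq> \<rho> \<Longrightarrow> \<exists>u. (u, v) \<in> E"
proof -
  assume v: "v \<in> V" "v \<noteq> \<rho>"
  then have "\<not> is_root N v" using root_unique by blast
  then have "indeg N v \<noteq> 0"
    using node_cases[OF v(1)] unfolding is_root_def is_leaf_def is_tree_node_def is_ret_def by auto
  then have "{u. (u, v) \<in> E} \<noteq> {}" unfolding indeg_def by (metis card.empty)
  then show ?thesis by blast
qed

lemma root_reaches: "v \<in> V \<Longrightarrow> (\<rho>, v) \<in> E\<^sup>*"
proof (induction v rule: wf_induct_rule[OF finite_acyclic_wf[OF finite_edges acyclic_edges]])
  case (1 v)
  show ?case
  proof (cases "v = \<rho>")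
    case False
    then obtain u where u: "(u, v) \<in> E" using parent_exists 1 by blast
    then have "(\<rho>, u) \<in> E\<^sup>*" using 1 edge_tail_node by blast
    then show ?thesis using u by (rule rtrancl_into_rtrancl)
  qed simp
qed

lemma edge_not_reversed: "(u, v) \<in> E \<Longrightarrow> (v, u) \<notin> E\<^sup>*"
  using acyclic_edges unfolding acyclic_def by (meson rtrancl_into_trancl2)

lemma below_ret_leaf_child:
  assumes "is_ret N r" and "(r, x) \<in> E\<^sup>+"
  shows "(r, x) \<in> E \<and> is_leaf N x"
proof -
  obtain z where z: "(r, z) \<in> E" "(z, x) \<in> E\<^sup>*" using tranclD[OF assms(2)] by blast
  have "is_leaf N z" using simplex_N assms(1) z(1) unfolding simplex_def by blast
  then have "z = x" using z(2) leaf_no_child by (metis converse_rtranclE)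
  with z \<open>is_leaf N z\<close> show ?thesis by simp
qed

lemma tree_node_in_top_comp: "is_tree_node N v \<Longrightarrow> v \<in> C"
  using below_ret_leaf_child leaf_not_tree_node unfolding top_comp_def
  by (auto simp: is_tree_node_def)

lemma top_comp_node: "v \<in> C \<Longrightarrow> v \<in> V"
  and top_comp_tree_node_or_leaf: "v \<in> C \<Longrightarrow> is_tree_node N v \<or> is_leaf N v"
  and top_comp_not_below_ret: "v \<in> C \<Longrightarrow> is_ret N r \<Longrightarrow> (r, v) \<notin> E\<^sup>+"
  unfolding top_comp_def by simp_all

lemma finite_top_comp: "finite C"
  using finite_nodes top_comp_node by (meson finite_subset subsetI)

lemma root_not_top_comp: "\<rho> \<notin> C"
  using is_root_root unfolding top_comp_def is_root_def is_tree_node_def is_leaf_def by auto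

lemma ancestor_iff: "v \<in> V \<Longrightarrow> ancestor N u v \<longleftrightarrow> u \<noteq> v \<and> (u, v) \<in> E\<^sup>*"
  unfolding ancestor_def using rtrancl_source_node root_reaches by blast

lemma anc_num_eq: "v \<in> V \<Longrightarrow> anc_num N v = card {u. u \<noteq> v \<and> (u, v) \<in> E\<^sup>*}"
  unfolding anc_num_def by (simp add: ancestor_iff)

text \<open>Besides \<open>w\<close> itself, the top-component nodes above \<open>w\<close> are exactly its ancestors
  other than the root.\<close>

lemma card_top_comp_above:
  assumes w: "w \<in> C"
  shows "card {v \<in> C. (v, w) \<in> E\<^sup>*} = anc_num N w"
proof -
  let ?S = "{u. u \<noteq> w \<and> (u, w) \<in> E\<^sup>*}"
  have wV: "w \<in> V" using top_comp_node w by simp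
  have root_S: "\<rho> \<in> ?S" using w root_not_top_comp root_reaches[OF wV] by auto
  have finite_S: "finite ?S" using finite_ancestors[OF wV] by simp
  have "{v \<in> C. (v, w) \<in> E\<^sup>*} = insert w (?S - {\<rho>})"
  proof (rule set_eqI, rule iffI)
    fix x assume "x \<in> {v \<in> C. (v, w) \<in> E\<^sup>*}"
    then show "x \<in> insert w (?S - {\<rho>})" using root_not_top_comp by auto
  next
    fix x assume x: "x \<in> insert w (?S - {\<rho>})"
    show "x \<in> {v \<in> C. (v, w) \<in> E\<^sup>*}"
    proof (cases "x = w")
      case True
      then show ?thesis using w by simp
    next
      case False
      then have xw: "(x, w) \<in> E\<^sup>+" "x \<noteq> \<rho>" using x by (auto simp: rtrancl_eq_or_trancl)
      obtain z where "(x, z) \<in> E" using tranclD[OF xw(1)] by blast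
      then have "\<not> is_leaf N x" using leaf_no_child by blast
      moreover have "\<not> is_root N x" using xw(2) root_unique by blast
      moreover have "\<not> is_ret N x" using top_comp_not_below_ret[OF w] xw(1) by blast
      moreover have "x \<in> V" using rtrancl_source_node[OF trancl_into_rtrancl[OF xw(1)] wV] .
      ultimately have "is_tree_node N x" using node_cases by blast
      then show ?thesis using tree_node_in_top_comp xw(1) by auto
    qed
  qed
  then have "card {v \<in> C. (v, w) \<in> E\<^sup>*} = card (?S - {\<rho>}) + 1"
    using finite_S by simp
  also have "\<dots> = card ?S"
  proof -
    have "card ?S > 0" using finite_S root_S card_gt_0_iff by blast
    then show ?thesis using card_Diff_singleton[OF root_S] by simp
  qed
  finally show ?thesis using anc_num_eq[OF wV] by simp
qed

lemma ToT_iff: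
  "a \<in> T \<longleftrightarrow> a \<in> E \<and> (is_tree_node N (snd a) \<or> is_leaf N (snd a)) \<and> \<not> is_ret N (fst a)"
  unfolding ToT_def tree_edge_def by simp

lemma ToT_edge: "a \<in> T \<Longrightarrow> a \<in> E"
  by (simp add: ToT_iff)

lemma finite_ToT: "finite T"
  using finite_edges ToT_edge by (meson finite_subset subsetI)

lemma ToT_head_not_above_tail: "a \<in> T \<Longrightarrow> (snd a, fst a) \<notin> E\<^sup>*"
  using edge_not_reversed ToT_edge by (metis prod.collapse)

lemma card_ToT_remove:
  assumes "a \<in> T"
  shows "int (card (T - {a})) = int (card T) - 1"
proof -
  have "card T > 0" using assms finite_ToT card_gt_0_iff by blast
  then show ?thesis using card_Diff_singleton[OF assms] by (simp add: of_nat_diff)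
qed

lemma bij_betw_head_ToT: "bij_betw snd T C"
proof (rule bij_betw_imageI)
  show "inj_on snd T"
  proof
    fix a b assume "a \<in> T" "b \<in> T" "snd a = snd b"
    have "is_tree_node N (snd a) \<or> is_leaf N (snd a)" using \<open>a \<in> T\<close> by (simp add: ToT_iff)
    moreover have "(fst a, snd a) \<in> E" using ToT_edge[OF \<open>a \<in> T\<close>] by simp
    moreover have "(fst b, snd a) \<in> E" using ToT_edge[OF \<open>b \<in> T\<close>] \<open>snd a = snd b\<close> by simp
    ultimately have "fst a = fst b" by (rule parent_unique)
    with \<open>snd a = snd b\<close> show "a = b" by (simp add: prod_eq_iff)
  qed
  show "snd ` T = C"
  proof (rule set_eqI, rule iffI)
    fix y assume "y \<in> snd ` T"
    then obtain x where e: "(x, y) \<in> T" by force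
    then have tl: "is_tree_node N y \<or> is_leaf N y" and "\<not> is_ret N x" and xy: "(x, y) \<in> E"
      by (auto simp: ToT_iff)
    have "(r, y) \<notin> E\<^sup>+" if "is_ret N r" for r
    proof
      assume "(r, y) \<in> E\<^sup>+"
      then have "r = x" using below_ret_leaf_child[OF that] parent_unique[OF tl _ xy] by blast
      then show False using that \<open>\<not> is_ret N x\<close> by simp
    qed
    then show "y \<in> C" using tl edge_head_node[OF xy] unfolding top_comp_def by blast
  next
    fix y assume y: "y \<in> C"
    then obtain x where xy: "(x, y) \<in> E"
      using parent_exists top_comp_node root_not_top_comp by blast
    then have "\<not> is_ret N x" using top_comp_not_below_ret[OF y] by blast
    then have "(x, y) \<in> T" using xy top_comp_tree_node_or_leaf[OF y] by (simp add: ToT_iff)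
    then show "y \<in> snd ` T" by force
  qed
qed

lemma anc_num_head:
  assumes "a \<in> T"
  shows "anc_num N (snd a) = card {u. (u, fst a) \<in> E\<^sup>*}"
proof -
  obtain x y where a: "a = (x, y)" by (cases a)
  have xy: "(x, y) \<in> E" and tl: "is_tree_node N y \<or> is_leaf N y"
    using assms a by (auto simp: ToT_iff)
  have "{u. u \<noteq> y \<and> (u, y) \<in> E\<^sup>*} = {u. (u, x) \<in> E\<^sup>*}"
  proof (rule set_eqI, rule iffI)
    fix u assume "u \<in> {u. u \<noteq> y \<and> (u, y) \<in> E\<^sup>*}"
    then have "u \<noteq> y" "(u, y) \<in> E\<^sup>*" by auto
    then obtain z where z: "(u, z) \<in> E\<^sup>*" "(z, y) \<in> E" by (metis rtranclE)
    then have "z = x" using parent_unique[OF tl] xy by blast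
    then show "u \<in> {u. (u, x) \<in> E\<^sup>*}" using z by simp
  next
    fix u assume "u \<in> {u. (u, x) \<in> E\<^sup>*}"
    then have ux: "(u, x) \<in> E\<^sup>*" by simp
    then have "(u, y) \<in> E\<^sup>*" using xy by (rule rtrancl_into_rtrancl)
    moreover have "u \<noteq> y" using ux edge_not_reversed[OF xy] by blast
    ultimately show "u \<in> {u. u \<noteq> y \<and> (u, y) \<in> E\<^sup>*}" by simp
  qed
  then show ?thesis using anc_num_eq[OF edge_head_node[OF xy]] a by simp
qed

lemma above_ToT_tail:
  assumes "(x, y) \<in> T"
  shows "{u. (u, x) \<in> E\<^sup>*} = insert \<rho> {v \<in> C. (v, x) \<in> E\<^sup>*}"
proof (rule set_eqI, rule iffI)
  have xy: "(x, y) \<in> E" and x_not_ret: "\<not> is_ret N x"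
    using assms by (auto simp: ToT_iff)
  fix u assume "u \<in> {u. (u, x) \<in> E\<^sup>*}"
  then have ux: "(u, x) \<in> E\<^sup>*" by simp
  have "is_tree_node N u" if "u \<noteq> \<rho>"
  proof -
    have "(u, y) \<in> E\<^sup>+" using ux xy by (rule rtrancl_into_trancl1)
    then obtain z where "(u, z) \<in> E" by (blast dest: tranclD)
    then have "\<not> is_leaf N u" using leaf_no_child by blast
    moreover have "\<not> is_root N u" using that root_unique by blast
    moreover have "\<not> is_ret N u"
    proof
      assume "is_ret N u"
      then have "u \<noteq> x" using x_not_ret by blast
      then have "(u, x) \<in> E\<^sup>+" using ux by (simp add: rtrancl_eq_or_trancl)
      then have "is_leaf N x" using below_ret_leaf_child[OF \<open>is_ret N u\<close>] by blast
      then show False using xy leaf_no_child by blast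
    qed
    moreover have "u \<in> V" using rtrancl_source_node[OF ux edge_tail_node[OF xy]] .
    ultimately show ?thesis using node_cases by blast
  qed
  then show "u \<in> insert \<rho> {v \<in> C. (v, x) \<in> E\<^sup>*}"
    using tree_node_in_top_comp ux by auto
next
  fix u assume "u \<in> insert \<rho> {v \<in> C. (v, x) \<in> E\<^sup>*}"
  then show "u \<in> {u. (u, x) \<in> E\<^sup>*}"
    using root_reaches edge_tail_node ToT_edge[OF assms] by auto
qed

lemma card_ToT_above_tail:
  assumes "a \<in> T"
  shows "card {b \<in> T. (snd b, fst a) \<in> E\<^sup>*} + 1 = anc_num N (snd a)"
proof -
  have "card {b \<in> T. (snd b, fst a) \<in> E\<^sup>*} = card (snd ` {b \<in> T. (snd b, fst a) \<in> E\<^sup>*})"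
    using bij_betw_head_ToT
    by (intro card_image[symmetric]) (auto simp: bij_betw_def intro: inj_on_subset)
  also have "snd ` {b \<in> T. (snd b, fst a) \<in> E\<^sup>*} = {v \<in> C. (v, fst a) \<in> E\<^sup>*}"
    using bij_betw_head_ToT by (auto simp: bij_betw_def)
  finally show ?thesis
    using anc_num_head[OF assms] above_ToT_tail[of "fst a" "snd a"] assms finite_top_comp
      root_not_top_comp
    by simp
qed

lemma sum_top_desc_num_heads: "(\<Sum>a\<in>T. top_desc_num N (snd a)) = A_C N"
proof -
  have "(\<Sum>a\<in>T. top_desc_num N (snd a)) = (\<Sum>v\<in>C. card {w \<in> C. (v, w) \<in> E\<^sup>*})"
    unfolding top_desc_num_def using sum.reindex_bij_betw[OF bij_betw_head_ToT] by simp
  also have "\<dots> = (\<Sum>w\<in>C. card {v \<in> C. (v, w) \<in> E\<^sup>*})"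
    using finite_top_comp finite_top_comp by (rule sum_card_filter_swap)
  also have "\<dots> = A_C N"
    unfolding A_C_def using card_top_comp_above by simp
  finally show ?thesis .
qed

lemma sum_anc_num_heads: "(\<Sum>a\<in>T. anc_num N (snd a)) = A_C N"
  unfolding A_C_def using sum.reindex_bij_betw[OF bij_betw_head_ToT] by simp

lemma card_edges_sum_indeg: "card E = (\<Sum>v\<in>V. indeg N v)"
proof -
  have "E = converse (SIGMA v:V. {u. (u, v) \<in> E})" using edges_subset by auto
  then have "card E = card (SIGMA v:V. {u. (u, v) \<in> E})" by (metis card_inverse)
  also have "\<dots> = (\<Sum>v\<in>V. indeg N v)"
    unfolding indeg_def using finite_nodes finite_parents by (simp add: card_SigmaI)
  finally show ?thesis .
qed

lemma card_edges_sum_outdeg: "card E = (\<Sum>v\<in>V. outdeg N v)"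
proof -
  have "E = (SIGMA v:V. {w. (v, w) \<in> E})" using edges_subset by auto
  then have "card E = card (SIGMA v:V. {w. (v, w) \<in> E})" by simp
  also have "\<dots> = (\<Sum>v\<in>V. outdeg N v)"
    unfolding outdeg_def using finite_nodes finite_children by (simp add: card_SigmaI)
  finally show ?thesis .
qed

lemma card_tree_nodes:
  "card {v \<in> V. is_tree_node N v} + 1 = card (leaves N) + card {r. is_ret N r}"
proof -
  let ?L = "int (card (leaves N))" and ?Tr = "int (card {v \<in> V. is_tree_node N v})"
    and ?R = "int (card {r. is_ret N r})"
  have count: "(\<Sum>v\<in>V. of_bool (Q v)) = int (card {v \<in> V. Q v})" for Q
    using finite_nodes by (simp add: Collect_conj_eq)
  have "{v \<in> V. is_root N v} = {\<rho>}"
  proof (rule set_eqI)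
    fix v show "v \<in> {v \<in> V. is_root N v} \<longleftrightarrow> v \<in> {\<rho>}"
      using is_root_root root_unique[of v] unfolding is_root_def by auto
  qed
  then have root: "(\<Sum>v\<in>V. of_bool (is_root N v)) = (1::int)"
    by (simp only: count) simp
  have leaves: "(\<Sum>v\<in>V. of_bool (is_leaf N v)) = ?L"
    unfolding count by (simp add: leaves_def is_leaf_def)
  have rets: "(\<Sum>v\<in>V. of_bool (is_ret N v)) = ?R"
    unfolding count by (simp add: is_ret_def)
  have indeg: "int (indeg N v)
      = of_bool (is_leaf N v) + of_bool (is_tree_node N v) + 2 * of_bool (is_ret N v)"
    and outdeg: "int (outdeg N v)
      = of_bool (is_root N v) + 2 * of_bool (is_tree_node N v) + of_bool (is_ret N v)"
    if "v \<in> V" for v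
    using node_cases[OF that] unfolding is_root_def is_leaf_def is_tree_node_def is_ret_def by auto
  have "int (card E) = (\<Sum>v\<in>V. int (indeg N v))"
    unfolding card_edges_sum_indeg by simp
  also have "\<dots> = ?L + ?Tr + 2 * ?R"
    using indeg by (simp add: sum.distrib leaves rets count flip: sum_distrib_left)
  finally have in_count: "int (card E) = ?L + ?Tr + 2 * ?R" .
  have "int (card E) = (\<Sum>v\<in>V. int (outdeg N v))"
    unfolding card_edges_sum_outdeg by simp
  also have "\<dots> = 1 + 2 * ?Tr + ?R"
    using outdeg by (simp add: sum.distrib root rets count flip: sum_distrib_left)
  finally have "int (card E) = 1 + 2 * ?Tr + ?R" .
  with in_count show ?thesis by linarith
qed

lemma top_comp_eq_tree_nodes_leaves:
  "C = {v \<in> V. is_tree_node N v} \<union> (leaves N - {c. \<exists>r. is_ret N r \<and> (r, c) \<in> E})"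
proof (rule set_eqI, rule iffI)
  fix v assume v: "v \<in> C"
  have "(r, v) \<notin> E" if "is_ret N r" for r
    using top_comp_not_below_ret[OF v that] by blast
  then show "v \<in> {v \<in> V. is_tree_node N v} \<union> (leaves N - {c. \<exists>r. is_ret N r \<and> (r, c) \<in> E})"
    using top_comp_node[OF v] top_comp_tree_node_or_leaf[OF v] by (auto simp: leaves_def)
next
  fix v assume "v \<in> {v \<in> V. is_tree_node N v} \<union> (leaves N - {c. \<exists>r. is_ret N r \<and> (r, c) \<in> E})"
  then consider "is_tree_node N v" | "is_leaf N v" "\<And>r. is_ret N r \<Longrightarrow> (r, v) \<notin> E"
    by (auto simp: leaves_def)
  then show "v \<in> C"
  proof cases
    case 2
    then have "\<And>r. is_ret N r \<Longrightarrow> (r, v) \<notin> E\<^sup>+" using below_ret_leaf_child by blast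
    then show ?thesis using 2(1) unfolding top_comp_def is_leaf_def by auto
  qed (rule tree_node_in_top_comp)
qed

end

lemma card_top_comp_OC:
  fixes N :: "'v network"
  assumes "OC k j N"
  shows "card (top_comp N) + 1 = 2 * (k + j)"
proof -
  have phylo: "phylo_network N {1..k+j}" and "simplex N" and card_rets: "card {r. is_ret N r} = j"
    and label_R: "label N ` {c. \<exists>r. is_ret N r \<and> (r, c) \<in> edges N} = {k+1..k+j}"
    using assms unfolding OC_def by blast+
  then interpret simplex_network N "{1..k+j}" by unfold_locales
  define R where "R = {c. \<exists>r. is_ret N r \<and> (r, c) \<in> E}"
  define Tr where "Tr = {v \<in> V. is_tree_node N v}"
  have label: "bij_betw (label N) (leaves N) {1..k+j}"
    using phylo by (simp add: phylo_network_def)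
  have finite_leaves: "finite (leaves N)"
    using finite_nodes by (rule finite_subset[rotated]) (auto simp: leaves_def is_leaf_def)
  have R_leaves: "R \<subseteq> leaves N"
    using simplex_N unfolding R_def simplex_def leaves_def by blast
  have "inj_on (label N) R"
    using label R_leaves unfolding bij_betw_def by (blast intro: inj_on_subset)
  then have "card R = card (label N ` R)" by (rule card_image[symmetric])
  then have card_R: "card R = j" using label_R unfolding R_def by simp
  have card_leaves: "card (leaves N) = k + j"
    using bij_betw_same_card[OF label] by simp
  have "Tr \<inter> (leaves N - R) = {}"
    using leaf_not_tree_node by (auto simp: Tr_def leaves_def)
  then have "card C = card Tr + card (leaves N - R)"
    unfolding top_comp_eq_tree_nodes_leaves R_def[symmetric] Tr_def[symmetric]
    using finite_leaves finite_nodes by (simp add: card_Un_disjoint Tr_def)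
  moreover have "card Tr + 1 = k + 2 * j"
    using card_tree_nodes card_rets card_leaves unfolding Tr_def by simp
  moreover have "card (leaves N - R) = k"
    using card_Diff_subset[OF finite_subset[OF R_leaves finite_leaves] R_leaves] card_leaves card_R
    by simp
  ultimately show ?thesis by simp
qed

section \<open>Inserting a reticulation\<close>

lemma ins_ret_set_edges [simp]:
  "(Old x, Old y) \<in> edges (ins_ret_set N P) \<longleftrightarrow> (x, y) \<in> edges N \<and> (x, y) \<notin> P"
  "(Old x, Sub e) \<in> edges (ins_ret_set N P) \<longleftrightarrow> e \<in> P \<and> fst e = x"
  "(Old x, Ret) \<notin> edges (ins_ret_set N P)"
  "(Old x, NewLeaf) \<notin> edges (ins_ret_set N P)"
  "(Sub e, Old y) \<in> edges (ins_ret_set N P) \<longleftrightarrow> e \<in> P \<and> snd e = y"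
  "(Sub e, Sub e') \<notin> edges (ins_ret_set N P)"
  "(Sub e, Ret) \<in> edges (ins_ret_set N P) \<longleftrightarrow> e \<in> P"
  "(Sub e, NewLeaf) \<notin> edges (ins_ret_set N P)"
  "(Ret, Old y) \<notin> edges (ins_ret_set N P)"
  "(Ret, Sub e) \<notin> edges (ins_ret_set N P)"
  "(Ret, Ret) \<notin> edges (ins_ret_set N P)"
  "(Ret, NewLeaf) \<in> edges (ins_ret_set N P)"
  "(NewLeaf, z) \<notin> edges (ins_ret_set N P)"
  unfolding ins_ret_set_def by force+

lemma ins_ret_set_nodes [simp]:
  "Old v \<in> nodes (ins_ret_set N P) \<longleftrightarrow> v \<in> nodes N"
  "Sub e \<in> nodes (ins_ret_set N P) \<longleftrightarrow> e \<in> P"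
  "Ret \<in> nodes (ins_ret_set N P)"
  "NewLeaf \<in> nodes (ins_ret_set N P)"
  unfolding ins_ret_set_def by auto

text \<open>Without \<open>Ret\<close> and \<open>NewLeaf\<close>, \<open>ins_ret_set N P\<close> is a subdivision of \<open>N\<close>. The node
  \<open>Sub (u, v)\<close> is entered from \<open>u\<close> and left towards \<open>v\<close>, so a path from \<open>x\<close> to \<open>y\<close> between
  subdivision nodes is a path in \<open>N\<close> from \<open>lower_end x\<close> to \<open>upper_end y\<close>.\<close>

fun subdiv_node :: "('v \<times> 'v) set \<Rightarrow> 'v ext \<Rightarrow> bool" where
  "subdiv_node P (Old v) = True"
| "subdiv_node P (Sub e) = (e \<in> P)"
| "subdiv_node P Ret = False"
| "subdiv_node P NewLeaf = False"

fun upper_end :: "'v ext \<Rightarrow> 'v" where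
  "upper_end (Old v) = v"
| "upper_end (Sub e) = fst e"
| "upper_end _ = undefined"

fun lower_end :: "'v ext \<Rightarrow> 'v" where
  "lower_end (Old v) = v"
| "lower_end (Sub e) = snd e"
| "lower_end _ = undefined"

lemma card_Old_Sub: "finite A \<Longrightarrow> finite B \<Longrightarrow> card (Old ` A \<union> Sub ` B) = card A + card B"
  by (subst card_Un_disjoint) (auto simp: card_image inj_on_def)

locale ret_insertion = simplex_network +
  fixes P
  assumes P_ToT: "P \<subseteq> ToT N" and card_P: "card P = 2"
begin

abbreviation "N' \<equiv> ins_ret_set N P"
abbreviation "E' \<equiv> edges N'"

lemma P_edge: "e \<in> P \<Longrightarrow> e \<in> E"
  using P_ToT ToT_edge by blast

lemma finite_P: "finite P"
  using card_P by (metis card.infinite zero_neq_numeral)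

lemma reach_from_Ret: "(Ret, y) \<in> E'\<^sup>* \<Longrightarrow> y = Ret \<or> y = NewLeaf"
proof (induction rule: rtrancl_induct)
  case (step y z)
  then show ?case by (cases z) auto
qed simp

lemma reach_from_subdiv_node:
  "(x, y) \<in> E'\<^sup>* \<Longrightarrow> subdiv_node P x \<Longrightarrow>
   y = x \<or> y = Ret \<or> y = NewLeaf \<or> (subdiv_node P y \<and> (lower_end x, upper_end y) \<in> E\<^sup>*)"
proof (induction rule: rtrancl_induct)
  case (step y z)
  from step.IH[OF step.prems]
  consider "y = x" | "y = Ret" | "y = NewLeaf"
    | "subdiv_node P y \<and> (lower_end x, upper_end y) \<in> E\<^sup>*"
    by blast
  then show ?case
  proof cases
    case 1
    then show ?thesis using step.hyps(2) step.prems by (cases x; cases z) auto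
  next
    case 2
    then show ?thesis using step.hyps(2) by (cases z) auto
  next
    case 3
    then show ?thesis using step.hyps(2) by simp
  next
    case 4
    show ?thesis
    proof (cases y)
      case (Sub e)
      then have "(fst e, snd e) \<in> E" using 4 P_edge by simp
      then show ?thesis using 4 step.hyps(2) Sub
        by (cases z) (auto intro: rtrancl_into_rtrancl)
    qed (use 4 step.hyps(2) in \<open>(cases z; auto intro: rtrancl_into_rtrancl)+\<close>)
  qed
qed simp

lemma edge_lift: "(p, q) \<in> E \<Longrightarrow> (Old p, Old q) \<in> E'\<^sup>+"
proof (cases "(p, q) \<in> P")
  case True
  then have "(Old p, Sub (p, q)) \<in> E'" "(Sub (p, q), Old q) \<in> E'" by simp_all
  then show ?thesis by (meson trancl.simps)
qed (simp add: r_into_trancl')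

lemma path_lift: "(p, q) \<in> E\<^sup>* \<Longrightarrow> (Old p, Old q) \<in> E'\<^sup>*"
proof (induction rule: rtrancl_induct)
  case (step y z)
  then show ?case
    using edge_lift[OF step.hyps(2)] by (meson rtrancl_trancl_trancl trancl_into_rtrancl)
qed simp

lemma subdiv_reach_iff:
  assumes "subdiv_node P x" and "subdiv_node P y"
  shows "(x, y) \<in> E'\<^sup>* \<longleftrightarrow> x = y \<or> (lower_end x, upper_end y) \<in> E\<^sup>*"
proof
  assume "(x, y) \<in> E'\<^sup>*"
  then show "x = y \<or> (lower_end x, upper_end y) \<in> E\<^sup>*"
    using reach_from_subdiv_node assms by fastforce
next
  assume "x = y \<or> (lower_end x, upper_end y) \<in> E\<^sup>*"
  moreover have "(x, Old (lower_end x)) \<in> E'\<^sup>*"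
    using assms(1) by (cases x) (auto intro: r_into_rtrancl)
  moreover have "(Old (upper_end y), y) \<in> E'\<^sup>*"
    using assms(2) by (cases y) (auto intro: r_into_rtrancl)
  ultimately show "(x, y) \<in> E'\<^sup>*"
    using path_lift by (meson rtrancl_trans rtrancl.rtrancl_refl)
qed

lemma source_subdiv_node: "(x, z) \<in> E' \<Longrightarrow> x \<noteq> Ret \<Longrightarrow> subdiv_node P x"
  by (cases x; cases z) auto

lemma indeg_Old: "indeg N' (Old v) = indeg N v"
proof -
  have parents: "{x. (x, Old v) \<in> E'} = Old ` {u. (u, v) \<in> E - P} \<union> Sub ` {e \<in> P. snd e = v}"
  proof (rule set_eqI)
    fix x show "x \<in> {x. (x, Old v) \<in> E'} \<longleftrightarrow> x \<in> Old ` {u. (u, v) \<in> E - P} \<union> Sub ` {e \<in> P. snd e = v}"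
      by (cases x) auto
  qed
  have "card {e \<in> P. snd e = v} = card {u. (u, v) \<in> P}"
    by (rule bij_betw_same_card[of fst]) (auto simp: bij_betw_def inj_on_def image_iff)
  also have "\<dots> = card {u. (u, v) \<in> E} - card {u. (u, v) \<in> E - P}"
    using finite_parents[of v] P_edge
    by (subst card_Diff_subset[symmetric]) (auto intro: finite_subset arg_cong[where f = card])
  moreover have "card {u. (u, v) \<in> E - P} \<le> card {u. (u, v) \<in> E}"
    by (rule card_mono[OF finite_parents]) auto
  ultimately show ?thesis
    unfolding indeg_def parents using finite_parents[of v] finite_P by (simp add: card_Old_Sub)
qed

lemma outdeg_Old: "outdeg N' (Old v) = outdeg N v"
proof -
  have children: "{x. (Old v, x) \<in> E'} = Old ` {w. (v, w) \<in> E - P} \<union> Sub ` {e \<in> P. fst e = v}"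
  proof (rule set_eqI)
    fix x show "x \<in> {x. (Old v, x) \<in> E'} \<longleftrightarrow> x \<in> Old ` {w. (v, w) \<in> E - P} \<union> Sub ` {e \<in> P. fst e = v}"
      by (cases x) auto
  qed
  have "card {e \<in> P. fst e = v} = card {w. (v, w) \<in> P}"
    by (rule bij_betw_same_card[of snd]) (auto simp: bij_betw_def inj_on_def image_iff)
  also have "\<dots> = card {w. (v, w) \<in> E} - card {w. (v, w) \<in> E - P}"
    using finite_children[of v] P_edge
    by (subst card_Diff_subset[symmetric]) (auto intro: finite_subset arg_cong[where f = card])
  moreover have "card {w. (v, w) \<in> E - P} \<le> card {w. (v, w) \<in> E}"
    by (rule card_mono[OF finite_children]) auto
  ultimately show ?thesis
    unfolding outdeg_def children using finite_children[of v] finite_P by (simp add: card_Old_Sub)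
qed

lemma degrees_Sub: "e \<in> P \<Longrightarrow> indeg N' (Sub e) = 1 \<and> outdeg N' (Sub e) = 2"
proof -
  assume e: "e \<in> P"
  have "{x. (x, Sub e) \<in> E'} = {Old (fst e)}"
  proof (rule set_eqI)
    fix x show "x \<in> {x. (x, Sub e) \<in> E'} \<longleftrightarrow> x \<in> {Old (fst e)}" using e by (cases x) auto
  qed
  moreover have "{x. (Sub e, x) \<in> E'} = {Old (snd e), Ret}"
  proof (rule set_eqI)
    fix x show "x \<in> {x. (Sub e, x) \<in> E'} \<longleftrightarrow> x \<in> {Old (snd e), Ret}" using e by (cases x) auto
  qed
  ultimately show ?thesis unfolding indeg_def outdeg_def by simp
qed

lemma degrees_Ret: "indeg N' Ret = 2 \<and> outdeg N' Ret = 1"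
proof -
  have "{x. (x, Ret) \<in> E'} = Sub ` P"
  proof (rule set_eqI)
    fix x show "x \<in> {x. (x, Ret) \<in> E'} \<longleftrightarrow> x \<in> Sub ` P" by (cases x) auto
  qed
  moreover have "{x. (Ret, x) \<in> E'} = {NewLeaf}"
  proof (rule set_eqI)
    fix x show "x \<in> {x. (Ret, x) \<in> E'} \<longleftrightarrow> x \<in> {NewLeaf}" by (cases x) auto
  qed
  moreover have "card (Sub ` P) = 2" using card_P by (subst card_image) (auto simp: inj_on_def)
  ultimately show ?thesis unfolding indeg_def outdeg_def by simp
qed

lemma degrees_NewLeaf: "indeg N' NewLeaf = 1 \<and> outdeg N' NewLeaf = 0"
proof -
  have "{x. (x, NewLeaf) \<in> E'} = {Ret}"
  proof (rule set_eqI)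
    fix x show "x \<in> {x. (x, NewLeaf) \<in> E'} \<longleftrightarrow> x \<in> {Ret}" by (cases x) auto
  qed
  then show ?thesis unfolding indeg_def outdeg_def by simp
qed

lemma node_kinds_Old:
  "is_tree_node N' (Old v) \<longleftrightarrow> is_tree_node N v"
  "is_leaf N' (Old v) \<longleftrightarrow> is_leaf N v"
  "is_ret N' (Old v) \<longleftrightarrow> is_ret N v"
  "is_root N' (Old v) \<longleftrightarrow> is_root N v"
  unfolding is_tree_node_def is_leaf_def is_ret_def is_root_def
  by (simp_all add: indeg_Old outdeg_Old)

lemma node_kinds_Sub:
  "is_tree_node N' (Sub e) \<longleftrightarrow> e \<in> P"
  "\<not> is_leaf N' (Sub e)" "\<not> is_ret N' (Sub e)" "\<not> is_root N' (Sub e)"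
  unfolding is_tree_node_def is_leaf_def is_ret_def is_root_def
  using degrees_Sub[of e] by auto

lemma node_kinds_Ret:
  "\<not> is_tree_node N' Ret" "\<not> is_leaf N' Ret" "is_ret N' Ret" "\<not> is_root N' Ret"
  unfolding is_tree_node_def is_leaf_def is_ret_def is_root_def
  using degrees_Ret by auto

lemma node_kinds_NewLeaf:
  "\<not> is_tree_node N' NewLeaf" "is_leaf N' NewLeaf" "\<not> is_ret N' NewLeaf" "\<not> is_root N' NewLeaf"
  unfolding is_tree_node_def is_leaf_def is_ret_def is_root_def
  using degrees_NewLeaf by auto

lemma root_of_ins: "root_of N' = Old \<rho>"
  unfolding root_of_def[of N']
proof (rule the_equality)
  show "is_root N' (Old \<rho>)" using is_root_root node_kinds_Old by simp
  show "x = Old \<rho>" if "is_root N' x" for x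
    using that root_unique node_kinds_Old node_kinds_Sub node_kinds_Ret node_kinds_NewLeaf
    by (cases x) auto
qed

lemma trancl_Old_iff: "(Old r, Old v) \<in> E'\<^sup>+ \<longleftrightarrow> (r, v) \<in> E\<^sup>+"
proof
  assume "(Old r, Old v) \<in> E'\<^sup>+"
  then obtain z where z: "(Old r, z) \<in> E'" "(z, Old v) \<in> E'\<^sup>*" by (blast dest: tranclD)
  then have "subdiv_node P z" by (cases z) auto
  then have "(lower_end z, v) \<in> E\<^sup>*"
    using subdiv_reach_iff[of z "Old v"] z(2) by auto
  moreover have "(r, lower_end z) \<in> E"
    using z(1) P_edge by (cases z) auto
  ultimately show "(r, v) \<in> E\<^sup>+" by (rule rtrancl_into_trancl2[rotated])
next
  assume "(r, v) \<in> E\<^sup>+"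
  then obtain q where q: "(r, q) \<in> E" "(q, v) \<in> E\<^sup>*" by (blast dest: tranclD)
  show "(Old r, Old v) \<in> E'\<^sup>+"
    using edge_lift[OF q(1)] path_lift[OF q(2)] by (rule trancl_rtrancl_trancl)
qed

lemma below_ret_ins_iff:
  "(\<exists>r'. is_ret N' r' \<and> (r', Old v) \<in> E'\<^sup>+) \<longleftrightarrow> (\<exists>r. is_ret N r \<and> (r, v) \<in> E\<^sup>+)"
proof
  assume "\<exists>r'. is_ret N' r' \<and> (r', Old v) \<in> E'\<^sup>+"
  then obtain r' where r': "is_ret N' r'" "(r', Old v) \<in> E'\<^sup>+" by blast
  show "\<exists>r. is_ret N r \<and> (r, v) \<in> E\<^sup>+"
  proof (cases r')
    case Ret
    then have "(Ret, Old v) \<in> E'\<^sup>*" using r' trancl_into_rtrancl by simp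
    then show ?thesis using reach_from_Ret by blast
  qed (use r' node_kinds_Old node_kinds_Sub node_kinds_NewLeaf trancl_Old_iff in auto)
next
  assume "\<exists>r. is_ret N r \<and> (r, v) \<in> E\<^sup>+"
  then show "\<exists>r'. is_ret N' r' \<and> (r', Old v) \<in> E'\<^sup>+"
    using node_kinds_Old trancl_Old_iff by blast
qed

lemma Sub_not_below_ret:
  assumes "e \<in> P" and "is_ret N' r'"
  shows "(r', Sub e) \<notin> E'\<^sup>+"
proof
  assume "(r', Sub e) \<in> E'\<^sup>+"
  then have path: "(r', Sub e) \<in> E'\<^sup>*" by (rule trancl_into_rtrancl)
  have e_ToT: "e \<in> T" using assms(1) P_ToT by blast
  show False
  proof (cases r')
    case (Old r)
    then have ret: "is_ret N r" using assms(2) node_kinds_Old by simp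
    then have "r \<noteq> fst e" using e_ToT by (auto simp: ToT_iff)
    moreover have "(r, fst e) \<in> E\<^sup>*"
      using subdiv_reach_iff[of r' "Sub e"] path Old assms(1) by auto
    ultimately have "(r, fst e) \<in> E\<^sup>+" by (simp add: rtrancl_eq_or_trancl)
    then have "is_leaf N (fst e)" using below_ret_leaf_child[OF ret] by blast
    then show False using ToT_edge[OF e_ToT] leaf_no_child by (metis prod.collapse)
  next
    case Ret
    then show False using path reach_from_Ret by blast
  qed (use assms(2) node_kinds_Sub node_kinds_NewLeaf in auto)
qed

lemma top_comp_ins: "top_comp N' = Old ` C \<union> Sub ` P"
proof (rule set_eqI)
  fix x show "x \<in> top_comp N' \<longleftrightarrow> x \<in> Old ` C \<union> Sub ` P"
  proof (cases x)
    case (Old v)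
    then show ?thesis
      using below_ret_ins_iff[of v] by (auto simp: top_comp_def node_kinds_Old)
  next
    case (Sub e)
    then show ?thesis
      using Sub_not_below_ret by (auto simp: top_comp_def node_kinds_Sub)
  next
    case Ret
    then show ?thesis by (auto simp: top_comp_def node_kinds_Ret)
  next
    case NewLeaf
    have "(Ret, NewLeaf) \<in> E'\<^sup>+" by (simp add: r_into_trancl')
    then show ?thesis using NewLeaf node_kinds_Ret by (auto simp: top_comp_def)
  qed
qed

lemma ancestor_ins_iff:
  assumes y: "subdiv_node P y" and "upper_end y \<in> V"
  shows "ancestor N' x y \<longleftrightarrow> x \<noteq> y \<and> subdiv_node P x \<and> (lower_end x, upper_end y) \<in> E\<^sup>*"
proof
  assume "ancestor N' x y"
  then have "x \<noteq> y" and xy: "(x, y) \<in> E'\<^sup>*" unfolding ancestor_def by auto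
  then obtain z where "(x, z) \<in> E'" by (metis converse_rtranclE)
  moreover have "x \<noteq> Ret" using xy reach_from_Ret y by force
  ultimately have "subdiv_node P x" by (rule source_subdiv_node)
  then show "x \<noteq> y \<and> subdiv_node P x \<and> (lower_end x, upper_end y) \<in> E\<^sup>*"
    using subdiv_reach_iff[of x y] xy y \<open>x \<noteq> y\<close> by auto
next
  assume x: "x \<noteq> y \<and> subdiv_node P x \<and> (lower_end x, upper_end y) \<in> E\<^sup>*"
  have "upper_end x \<in> V"
  proof (cases x)
    case (Old u)
    then show ?thesis using x rtrancl_source_node assms(2) by auto
  next
    case (Sub e)
    then show ?thesis
      using x P_edge edge_tail_node by (metis prod.collapse subdiv_node.simps(2) upper_end.simps(2))
  qed (use x in auto)
  then have "(Old \<rho>, x) \<in> E'\<^sup>*"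
    using subdiv_reach_iff[of "Old \<rho>" x] x root_reaches by simp
  moreover have "(x, y) \<in> E'\<^sup>*" using subdiv_reach_iff[of x y] x y by simp
  ultimately show "ancestor N' x y" unfolding ancestor_def root_of_ins using x by simp
qed

lemma anc_num_Old:
  assumes "v \<in> V"
  shows "anc_num N' (Old v) = anc_num N v + card {e \<in> P. (snd e, v) \<in> E\<^sup>*}"
proof -
  have "{x. ancestor N' x (Old v)}
      = Old ` {u. u \<noteq> v \<and> (u, v) \<in> E\<^sup>*} \<union> Sub ` {e \<in> P. (snd e, v) \<in> E\<^sup>*}"
  proof (rule set_eqI)
    fix x show "x \<in> {x. ancestor N' x (Old v)}
      \<longleftrightarrow> x \<in> Old ` {u. u \<noteq> v \<and> (u, v) \<in> E\<^sup>*} \<union> Sub ` {e \<in> P. (snd e, v) \<in> E\<^sup>*}"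
      using ancestor_ins_iff[of "Old v" x] assms by (cases x) auto
  qed
  then show ?thesis
    unfolding anc_num_def anc_num_eq[OF assms, unfolded anc_num_def]
    using finite_ancestors[OF assms] finite_P by (simp add: card_Old_Sub)
qed

lemma anc_num_Sub:
  assumes e: "e \<in> P"
  shows "anc_num N' (Sub e) = anc_num N (snd e) + card {e' \<in> P. (snd e', fst e) \<in> E\<^sup>*}"
proof -
  have e_ToT: "e \<in> T" using e P_ToT by blast
  have fst_V: "fst e \<in> V" using P_edge[OF e] edge_tail_node by (metis prod.collapse)
  have "{x. ancestor N' x (Sub e)}
      = Old ` {u. (u, fst e) \<in> E\<^sup>*} \<union> Sub ` {e' \<in> P. (snd e', fst e) \<in> E\<^sup>*}"
  proof (rule set_eqI)
    fix x show "x \<in> {x. ancestor N' x (Sub e)}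
      \<longleftrightarrow> x \<in> Old ` {u. (u, fst e) \<in> E\<^sup>*} \<union> Sub ` {e' \<in> P. (snd e', fst e) \<in> E\<^sup>*}"
      using ancestor_ins_iff[of "Sub e" x] e fst_V ToT_head_not_above_tail[OF e_ToT]
      by (cases x) auto
  qed
  then show ?thesis
    unfolding anc_num_def anc_num_head[OF e_ToT, unfolded anc_num_def]
    using finite_ancestors[OF fst_V, of "\<lambda>_. True"] finite_P by (simp add: card_Old_Sub)
qed

lemma A_C_ins_ret_set:
  "A_C N' = A_C N + (\<Sum>e\<in>P. top_desc_num N (snd e) + anc_num N (snd e)
                              + card {e' \<in> P. (snd e', fst e) \<in> E\<^sup>*})"
proof -
  have "A_C N' = (\<Sum>x \<in> Old ` C. anc_num N' x) + (\<Sum>x \<in> Sub ` P. anc_num N' x)"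
    unfolding A_C_def top_comp_ins using finite_top_comp finite_P
    by (subst sum.union_disjoint) auto
  also have "(\<Sum>x \<in> Old ` C. anc_num N' x) = (\<Sum>v \<in> C. anc_num N v + card {e \<in> P. (snd e, v) \<in> E\<^sup>*})"
    by (subst sum.reindex) (auto simp: inj_on_def anc_num_Old top_comp_node)
  also have "\<dots> = A_C N + (\<Sum>e\<in>P. top_desc_num N (snd e))"
    unfolding A_C_def top_desc_num_def sum.distrib
    using sum_card_filter_swap[OF finite_top_comp finite_P, of "\<lambda>v e. (snd e, v) \<in> E\<^sup>*"] by simp
  also have "(\<Sum>x \<in> Sub ` P. anc_num N' x)
      = (\<Sum>e\<in>P. anc_num N (snd e) + card {e' \<in> P. (snd e', fst e) \<in> E\<^sup>*})"
    by (subst sum.reindex) (auto simp: inj_on_def anc_num_Sub)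
  finally show ?thesis by (simp add: sum.distrib)
qed

end

section \<open>Summing over pairs of edges\<close>

text \<open>The increase of \<open>A_C\<close> caused by the subdivision node on \<open>a\<close> when the other subdivided
  edge is \<open>b\<close>: it becomes an ancestor of the top-component nodes below \<open>a\<close>, it has as many
  ancestors as the head of \<open>a\<close>, and one more if the subdivision node on \<open>b\<close> lies above it.\<close>

definition subdivision_gain :: "('v, 'b) network_scheme \<Rightarrow> 'v \<times> 'v \<Rightarrow> 'v \<times> 'v \<Rightarrow> nat" where
  "subdivision_gain N a b =
     top_desc_num N (snd a) + anc_num N (snd a) + of_bool ((snd b, fst a) \<in> (edges N)\<^sup>*)"

context simplex_network
begin

lemma A_C_ins_pair:
  assumes "a \<in> T" and "b \<in> T" and "a \<noteq> b"
  shows "A_C (ins_ret_set N {a, b}) = A_C N + subdivision_gain N a b + subdivision_gain N b a"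
proof -
  interpret ret_insertion N X "{a, b}"
    using assms by unfold_locales auto
  have "{e \<in> {a, b}. (snd e, fst a) \<in> E\<^sup>*} = (if (snd b, fst a) \<in> E\<^sup>* then {b} else {})"
    and "{e \<in> {a, b}. (snd e, fst b) \<in> E\<^sup>*} = (if (snd a, fst b) \<in> E\<^sup>* then {a} else {})"
    using ToT_head_not_above_tail[OF assms(1)] ToT_head_not_above_tail[OF assms(2)] by auto
  then show ?thesis
    using A_C_ins_ret_set assms(3) unfolding subdivision_gain_def by simp
qed

lemma sum_subdivision_gain_row:
  assumes "a \<in> T"
  shows "(\<Sum>b\<in>T - {a}. int (subdivision_gain N a b))
         = (int (card T) - 1) * int (top_desc_num N (snd a) + anc_num N (snd a))
           + int (anc_num N (snd a)) - 1"
proof -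
  define c where "c = int (card (T - {a}))"
  have card: "int (card T) = c + 1"
    using card_ToT_remove[OF assms] unfolding c_def by simp
  have "(T - {a}) \<inter> {b. (snd b, fst a) \<in> E\<^sup>*} = {b \<in> T. (snd b, fst a) \<in> E\<^sup>*}"
    using ToT_head_not_above_tail[OF assms] by auto
  then have "(\<Sum>b\<in>T - {a}. of_bool ((snd b, fst a) \<in> E\<^sup>*)) = int (anc_num N (snd a)) - 1"
    using finite_ToT card_ToT_above_tail[OF assms] by simp
  then show ?thesis
    unfolding subdivision_gain_def card by (simp add: sum.distrib c_def[symmetric] algebra_simps)
qed

lemma sum_A_C_ins_pairs:
  "(\<Sum>a\<in>T. \<Sum>b\<in>T - {a}. int (A_C (ins_ret_set N {a, b})))
   = (int (card T) ^ 2 + 3 * int (card T) - 2) * int (A_C N) - 2 * int (card T)"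
proof -
  let ?m = "int (card T)" and ?A = "int (A_C N)" and ?g = "\<lambda>a b. int (subdivision_gain N a b)"
  have gains: "(\<Sum>a\<in>T. \<Sum>b\<in>T - {a}. ?g a b) = 2 * (?m - 1) * ?A + ?A - ?m"
  proof -
    have "(\<Sum>a\<in>T. \<Sum>b\<in>T - {a}. ?g a b)
        = (\<Sum>a\<in>T. (?m - 1) * int (top_desc_num N (snd a)) + ?m * int (anc_num N (snd a)) - 1)"
      using sum_subdivision_gain_row by (intro sum.cong) (simp_all add: algebra_simps)
    also have "\<dots> = (?m - 1) * ?A + ?m * ?A - ?m"
      using sum_top_desc_num_heads sum_anc_num_heads
      by (simp add: sum_subtractf sum.distrib flip: sum_distrib_left of_nat_sum)
    finally show ?thesis by (simp add: algebra_simps)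
  qed
  have constant_part: "(\<Sum>a\<in>T. \<Sum>b\<in>T - {a}. ?A) = ?m * (?m - 1) * ?A"
    using card_ToT_remove by (simp del: card_Diff_insert)
  have "(\<Sum>a\<in>T. \<Sum>b\<in>T - {a}. int (A_C (ins_ret_set N {a, b})))
      = (\<Sum>a\<in>T. \<Sum>b\<in>T - {a}. ?A + ?g a b + ?g b a)"
  proof (intro sum.cong refl)
    fix a b assume "a \<in> T" and "b \<in> T - {a}"
    then show "int (A_C (ins_ret_set N {a, b})) = ?A + ?g a b + ?g b a"
      using A_C_ins_pair[of a b] by auto
  qed
  also have "\<dots> = ?m * (?m - 1) * ?A + (\<Sum>a\<in>T. \<Sum>b\<in>T - {a}. ?g a b)
                   + (\<Sum>a\<in>T. \<Sum>b\<in>T - {a}. ?g b a)"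
    unfolding sum.distrib constant_part ..
  also have "\<dots> = (?m ^ 2 + 3 * ?m - 2) * ?A - 2 * ?m"
    unfolding sum_offdiag_swap[of ?g T, symmetric] gains
    by (simp add: power2_eq_square algebra_simps)
  finally show ?thesis .
qed

end

theorem mainTheorem7:
  fixes N :: "'v network" and k j n :: nat
  assumes "k \<ge> 1" and "n = k + j" and "OC k j N"
  shows "int (\<Sum>P \<in> {{e', e''} | e' e''. e' \<in> ToT N \<and> e'' \<in> ToT N \<and> e' \<noteq> e''}.
                A_C (ins_ret_set N P))
         = (2 * int n ^ 2 + int n - 2) * int (A_C N) - (2 * int n - 1)"
proof -
  interpret simplex_network N "{1..k+j}"
    using \<open>OC k j N\<close> unfolding OC_def by unfold_locales blast+
  have m: "int (card (ToT N)) = 2 * int n - 1"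
    using card_top_comp_OC[OF \<open>OC k j N\<close>] bij_betw_same_card[OF bij_betw_head_ToT] \<open>n = k + j\<close>
    by simp
  have "2 * int (\<Sum>P \<in> {{e', e''} | e' e''. e' \<in> ToT N \<and> e'' \<in> ToT N \<and> e' \<noteq> e''}.
                A_C (ins_ret_set N P))
        = (\<Sum>a\<in>ToT N. \<Sum>b\<in>ToT N - {a}. int (A_C (ins_ret_set N {a, b})))"
    unfolding of_nat_sum by (rule sum_doubletons[OF finite_ToT])
  also have "\<dots> = 2 * ((2 * int n ^ 2 + int n - 2) * int (A_C N) - (2 * int n - 1))"
    unfolding sum_A_C_ins_pairs m by (simp add: power2_eq_square algebra_simps)
  finally show ?thesis by simp
qed

end
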